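(* There is a Katětov functor $F\colon\mathcal U_{\mathrm{fin}}\to\mathcal U_{\mathrm{fin}}$, i.e. a functor $F$ together with a natural transformation $\eta\colon\mathrm{id}_{\mathcal U_{\mathrm{fin}}}\to F$ such that for every finite two-sorted ultrametric space $X$ and every one-point extension $f\colon X\to Y$ there is a dc-embedding $g\colon Y\to F(X)$ with $g\circ f=\eta_X$.
   Context: A two-sorted ultrametric space is $(X,d_X,D_X)$ with $D_X$ a linear order with least element $0$, $d_X\colon X\times X\to D_X$ symmetric, $d_X(x,y)=0\iff x=y$, $d_X(x,z)\le\max\{d_X(x,y),d_X(y,z)\}$; finite if both sorts are finite. $\mathcal U_{\mathrm{fin}}$ is the category of finite two-sorted ultrametric spaces with dc-embeddings (an injection $f$ on points with an order embedding $D_f$ of distance sets fixing $0$ such that $d(f(x),f(x'))=D_f(d(x,x'))$). A one-point extension is a dc-embedding between finite spaces that (up to isomorphism) either adds exactly one new distance and no new points, or adds exactly one new point and no new distances. *)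

theory Defs
  imports Main
begin

text \<open>Finite two-sorted ultrametric spaces, represented concretely: points are natural
numbers, the distance sort is a finite set of natural numbers ordered by the usual order
of nat, with least element 0.  Every finite two-sorted ultrametric space is isomorphic to
one of this form, so the resulting category is equivalent to U_fin.\<close>

record uspace =
  pts   :: "nat set"
  dists :: "nat set"
  dist  :: "nat \<Rightarrow> nat \<Rightarrow> nat"

definition fin_ultra :: "uspace \<Rightarrow> bool" where
  "fin_ultra X \<longleftrightarrow>
     finite (pts X) \<and> finite (dists X) \<and> (0::nat) \<in> dists X \<and>
     (\<forall>x\<in>pts X. \<forall>y\<in>pts X. dist X x y \<in> dists X) \<and>
     (\<forall>x\<in>pts X. \<forall>y\<in>pts X. dist X x y = dist X y x) \<and>
     (\<forall>x\<in>pts X. \<forall>y\<in>pts X. dist X x y = 0 \<longleftrightarrow> x = y) \<and>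
     (\<forall>x\<in>pts X. \<forall>y\<in>pts X. \<forall>z\<in>pts X. dist X x z \<le> max (dist X x y) (dist X y z))"

text \<open>A morphism is a pair (map on points, map on distances).\<close>
type_synonym umor = "(nat \<Rightarrow> nat) \<times> (nat \<Rightarrow> nat)"

definition dc_emb :: "uspace \<Rightarrow> uspace \<Rightarrow> umor \<Rightarrow> bool" where
  "dc_emb X Y m \<longleftrightarrow>
     fst m ` pts X \<subseteq> pts Y \<and> inj_on (fst m) (pts X) \<and>
     snd m ` dists X \<subseteq> dists Y \<and>
     (\<forall>a\<in>dists X. \<forall>b\<in>dists X. a \<le> b \<longleftrightarrow> snd m a \<le> snd m b) \<and>
     snd m 0 = 0 \<and>
     (\<forall>x\<in>pts X. \<forall>x'\<in>pts X. dist Y (fst m x) (fst m x') = snd m (dist X x x'))"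

definition mcomp :: "umor \<Rightarrow> umor \<Rightarrow> umor" where
  "mcomp g f = (fst g \<circ> fst f, snd g \<circ> snd f)"

definition mid :: umor where
  "mid = (id, id)"

text \<open>Equality of morphisms with domain X (functions are only relevant on X).\<close>
definition meq :: "uspace \<Rightarrow> umor \<Rightarrow> umor \<Rightarrow> bool" where
  "meq X f g \<longleftrightarrow> (\<forall>x\<in>pts X. fst f x = fst g x) \<and> (\<forall>a\<in>dists X. snd f a = snd g a)"

definition one_point_ext :: "uspace \<Rightarrow> uspace \<Rightarrow> umor \<Rightarrow> bool" where
  "one_point_ext X Y f \<longleftrightarrow> dc_emb X Y f \<and>
     ((fst f ` pts X = pts Y \<and> card (dists Y - snd f ` dists X) = 1) \<or>
      (card (pts Y - fst f ` pts X) = 1 \<and> snd f ` dists X = dists Y))"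

text \<open>F on objects, Fm X Y f the action on a morphism f : X \<rightarrow> Y, eta the components.\<close>
definition is_functor :: "(uspace \<Rightarrow> uspace) \<Rightarrow> (uspace \<Rightarrow> uspace \<Rightarrow> umor \<Rightarrow> umor) \<Rightarrow> bool" where
  "is_functor F Fm \<longleftrightarrow>
     (\<forall>X. fin_ultra X \<longrightarrow> fin_ultra (F X)) \<and>
     (\<forall>X Y f. fin_ultra X \<and> fin_ultra Y \<and> dc_emb X Y f \<longrightarrow> dc_emb (F X) (F Y) (Fm X Y f)) \<and>
     (\<forall>X Y f f'. fin_ultra X \<and> fin_ultra Y \<and> dc_emb X Y f \<and> dc_emb X Y f' \<and> meq X f f'
        \<longrightarrow> meq (F X) (Fm X Y f) (Fm X Y f')) \<and>
     (\<forall>X. fin_ultra X \<longrightarrow> meq (F X) (Fm X X mid) mid) \<and>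
     (\<forall>X Y Z f g. fin_ultra X \<and> fin_ultra Y \<and> fin_ultra Z \<and> dc_emb X Y f \<and> dc_emb Y Z g
        \<longrightarrow> meq (F X) (Fm X Z (mcomp g f)) (mcomp (Fm Y Z g) (Fm X Y f)))"

definition is_nat_trans_id :: "(uspace \<Rightarrow> uspace) \<Rightarrow> (uspace \<Rightarrow> uspace \<Rightarrow> umor \<Rightarrow> umor)
     \<Rightarrow> (uspace \<Rightarrow> umor) \<Rightarrow> bool" where
  "is_nat_trans_id F Fm eta \<longleftrightarrow>
     (\<forall>X. fin_ultra X \<longrightarrow> dc_emb X (F X) (eta X)) \<and>
     (\<forall>X Y f. fin_ultra X \<and> fin_ultra Y \<and> dc_emb X Y f
        \<longrightarrow> meq X (mcomp (Fm X Y f) (eta X)) (mcomp (eta Y) f))"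

definition katetov_functor :: "(uspace \<Rightarrow> uspace) \<Rightarrow> (uspace \<Rightarrow> uspace \<Rightarrow> umor \<Rightarrow> umor)
     \<Rightarrow> (uspace \<Rightarrow> umor) \<Rightarrow> bool" where
  "katetov_functor F Fm eta \<longleftrightarrow>
     is_functor F Fm \<and> is_nat_trans_id F Fm eta \<and>
     (\<forall>X Y f. fin_ultra X \<and> fin_ultra Y \<and> one_point_ext X Y f
        \<longrightarrow> (\<exists>g. dc_emb Y (F X) g \<and> meq X (mcomp g f) (eta X)))"

end

theory Submission
  imports Defs "HOL-Library.Countable"
begin

text \<open>
  The Katetov space \<open>F X\<close> consists of the Katetov functions on \<open>X\<close>, i.e. the functions
  \<open>h\<close> with \<open>h x \<le> max (h y) (d x y)\<close> and \<open>d x y \<le> max (h x) (h y)\<close>, among them the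
  functions \<open>d x\<close> representing the points of \<open>X\<close>; two of them are at distance
  \<open>min\<^sub>x max (h x) (k x)\<close>.  All distances are doubled, which leaves the odd values
  \<open>2a + 1\<close> free, and one extra point at a distance beyond all others replaces the Katetov
  function of the empty space, which could not be extended along embeddings.  An embedding
  \<open>f : X \<rightarrow> Y\<close> acts on Katetov functions by the least extension
  \<open>y \<mapsto> min\<^sub>x max (f (h x)) (d (f x) y)\<close>, which makes \<open>F\<close> a functor and
  \<open>\<eta>\<^sub>X x = d x\<close> natural.

  A one-point extension \<open>Y\<close> of \<open>X\<close> embeds into \<open>F X\<close> over \<open>\<eta>\<^sub>X\<close>: a new point
  \<open>p\<close> is sent to the Katetov function \<open>x \<mapsto> d p (f x)\<close> read back in \<open>X\<close>, and a new
  distance, lying strictly between consecutive old distances \<open>f a < f a'\<close>, to the free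
  odd distance \<open>2a + 1\<close>.
\<close>

lemma fin_ultraD:
  assumes "fin_ultra X"
  shows "finite (pts X)" "finite (dists X)" "0 \<in> dists X"
    "\<And>x y. x \<in> pts X \<Longrightarrow> y \<in> pts X \<Longrightarrow> dist X x y \<in> dists X"
    "\<And>x y. x \<in> pts X \<Longrightarrow> y \<in> pts X \<Longrightarrow> dist X x y = dist X y x"
    "\<And>x y. x \<in> pts X \<Longrightarrow> y \<in> pts X \<Longrightarrow> dist X x y = 0 \<longleftrightarrow> x = y"
    "\<And>x y z. x \<in> pts X \<Longrightarrow> y \<in> pts X \<Longrightarrow> z \<in> pts X \<Longrightarrow>
      dist X x z \<le> max (dist X x y) (dist X y z)"
  using assms unfolding fin_ultra_def by (elim conjE; simp)+

lemma fin_ultra_dist_self: "fin_ultra X \<Longrightarrow> x \<in> pts X \<Longrightarrow> dist X x x = 0"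
  using fin_ultraD(6) by blast

lemma dc_embD:
  assumes "dc_emb X Y f"
  shows "\<And>x. x \<in> pts X \<Longrightarrow> fst f x \<in> pts Y" "inj_on (fst f) (pts X)"
    "\<And>a. a \<in> dists X \<Longrightarrow> snd f a \<in> dists Y"
    "strict_mono_on (dists X) (snd f)"
    "snd f 0 = 0"
    "\<And>x x'. x \<in> pts X \<Longrightarrow> x' \<in> pts X \<Longrightarrow> dist Y (fst f x) (fst f x') = snd f (dist X x x')"
  using assms unfolding dc_emb_def strict_mono_on_def
  by (elim conjE; force simp: image_subset_iff not_le[symmetric])+

lemma dc_emb_max:
  assumes "dc_emb X Y f" "a \<in> dists X" "b \<in> dists X"
  shows "snd f (max a b) = max (snd f a) (snd f b)"
  using strict_mono_on_less_eq[OF dc_embD(4)[OF assms(1)] assms(2,3)] by (simp add: max_def)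

lemma dc_emb_le_max_iff:
  assumes "dc_emb X Y f" "a \<in> dists X" "b \<in> dists X" "c \<in> dists X"
  shows "snd f a \<le> max (snd f b) (snd f c) \<longleftrightarrow> a \<le> max b c"
proof -
  have "max b c \<in> dists X" using assms(3,4) by (simp add: max_def)
  then show ?thesis
    using dc_emb_max[OF assms(1,3,4)] strict_mono_on_less_eq[OF dc_embD(4)[OF assms(1)] assms(2)]
    by metis
qed

lemma dc_emb_mid: "dc_emb X X mid"
  unfolding dc_emb_def mid_def by simp

lemma mcomp_simps [simp]:
  "fst (mcomp g f) = fst g \<circ> fst f" "snd (mcomp g f) = snd g \<circ> snd f"
  unfolding mcomp_def by simp_all

lemma mid_simps [simp]: "fst mid = id" "snd mid = id"
  unfolding mid_def by simp_all

section \<open>Katetov functions\<close>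

definition katetov :: "uspace \<Rightarrow> (nat \<Rightarrow> nat) set" where
  "katetov X = {h. pts X \<noteq> {} \<and> (\<forall>x. x \<notin> pts X \<longrightarrow> h x = 0) \<and> (\<forall>x\<in>pts X. h x \<in> dists X) \<and>
     (\<forall>x\<in>pts X. \<forall>y\<in>pts X. h x \<le> max (h y) (dist X x y) \<and> dist X x y \<le> max (h x) (h y))}"

definition kat_point :: "uspace \<Rightarrow> nat \<Rightarrow> nat \<Rightarrow> nat" where
  "kat_point X x = (\<lambda>y. if y \<in> pts X then dist X x y else 0)"

definition kat_dist :: "uspace \<Rightarrow> (nat \<Rightarrow> nat) \<Rightarrow> (nat \<Rightarrow> nat) \<Rightarrow> nat" where
  "kat_dist X h k = (if h = k then 0 else Min ((\<lambda>x. max (h x) (k x)) ` pts X))"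

lemma katetovD:
  assumes "h \<in> katetov X"
  shows "pts X \<noteq> {}" "\<And>x. x \<notin> pts X \<Longrightarrow> h x = 0" "\<And>x. x \<in> pts X \<Longrightarrow> h x \<in> dists X"
    "\<And>x y. x \<in> pts X \<Longrightarrow> y \<in> pts X \<Longrightarrow> h x \<le> max (h y) (dist X x y)"
    "\<And>x y. x \<in> pts X \<Longrightarrow> y \<in> pts X \<Longrightarrow> dist X x y \<le> max (h x) (h y)"
  using assms unfolding katetov_def by (elim CollectE conjE; simp)+

lemma katetov_eqI:
  "h \<in> katetov X \<Longrightarrow> k \<in> katetov X \<Longrightarrow> (\<And>x. x \<in> pts X \<Longrightarrow> h x = k x) \<Longrightarrow> h = k"
  using katetovD(2) by (metis ext)

lemma finite_katetov: "fin_ultra X \<Longrightarrow> finite (katetov X)"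
proof -
  assume X: "fin_ultra X"
  have "katetov X \<subseteq> {h. \<forall>x. (x \<in> pts X \<longrightarrow> h x \<in> dists X) \<and> (x \<notin> pts X \<longrightarrow> h x = 0)}"
    using katetovD by blast
  then show ?thesis
    using finite_set_of_finite_funs[OF fin_ultraD(1,2)[OF X]] finite_subset by blast
qed

lemma kat_point_katetov:
  assumes X: "fin_ultra X" and x: "x \<in> pts X"
  shows "kat_point X x \<in> katetov X"
proof -
  have "dist X x y \<le> max (dist X x z) (dist X y z)" "dist X y z \<le> max (dist X x y) (dist X x z)"
    if "y \<in> pts X" "z \<in> pts X" for y z
    using that x fin_ultraD(5,7)[OF X] by (metis max.commute)+
  then show ?thesis
    unfolding katetov_def kat_point_def using x fin_ultraD(4)[OF X] by auto
qed

lemma kat_dist_commute: "kat_dist X h k = kat_dist X k h"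
  unfolding kat_dist_def by (simp add: max.commute)

context
  fixes X :: uspace
  assumes X: "fin_ultra X"
begin

lemma kat_dist_le:
  assumes "x \<in> pts X"
  shows "kat_dist X h k \<le> max (h x) (k x)"
  using assms fin_ultraD(1)[OF X] unfolding kat_dist_def by (auto intro!: Min_le)

lemma kat_dist_attained:
  assumes "h \<in> katetov X" "h \<noteq> k"
  obtains y where "y \<in> pts X" "kat_dist X h k = max (h y) (k y)"
proof -
  have "Min ((\<lambda>x. max (h x) (k x)) ` pts X) \<in> (\<lambda>x. max (h x) (k x)) ` pts X"
    using fin_ultraD(1)[OF X] katetovD(1)[OF assms(1)] by (intro Min_in) auto
  then show thesis using assms that unfolding kat_dist_def by auto
qed

lemma katetov_le_kat_dist:
  assumes h: "h \<in> katetov X" and k: "k \<in> katetov X" and x: "x \<in> pts X"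
  shows "h x \<le> max (kat_dist X h k) (k x)"
proof (cases "h = k")
  case False
  then obtain y where y: "y \<in> pts X" "kat_dist X h k = max (h y) (k y)"
    using kat_dist_attained h by blast
  have "h x \<le> max (h y) (dist X x y)" using katetovD(4)[OF h x y(1)] .
  moreover have "dist X x y \<le> max (k x) (k y)" using katetovD(5)[OF k x y(1)] .
  ultimately show ?thesis using y(2) by linarith
qed simp

lemma kat_dist_eq_max:
  assumes h: "h \<in> katetov X" and k: "k \<in> katetov X" and x: "x \<in> pts X" and ne: "h x \<noteq> k x"
  shows "kat_dist X h k = max (h x) (k x)"
  using katetov_le_kat_dist[OF h k x] katetov_le_kat_dist[OF k h x] kat_dist_le[OF x, of h k] ne
    kat_dist_commute[of X h k]
  by (auto simp: max_def split: if_splits)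

lemma kat_dist_triangle:
  assumes h: "h \<in> katetov X" and k: "k \<in> katetov X" and l: "l \<in> katetov X"
  shows "kat_dist X h l \<le> max (kat_dist X h k) (kat_dist X k l)"
proof (cases "h = k")
  case False
  then obtain y where y: "y \<in> pts X" "kat_dist X h k = max (h y) (k y)"
    using kat_dist_attained h by blast
  have "kat_dist X h l \<le> max (h y) (l y)" using kat_dist_le[OF y(1)] .
  moreover have "l y \<le> max (kat_dist X l k) (k y)" using katetov_le_kat_dist[OF l k y(1)] .
  ultimately show ?thesis using y(2) kat_dist_commute[of X l k] by linarith
qed simp

lemma kat_dist_eq_0_iff:
  assumes h: "h \<in> katetov X" and k: "k \<in> katetov X"
  shows "kat_dist X h k = 0 \<longleftrightarrow> h = k"
proof
  assume "kat_dist X h k = 0"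
  then show "h = k"
    using kat_dist_eq_max[OF h k] by (intro katetov_eqI[OF h k]) (metis le_zero_eq max.cobounded1 max.cobounded2)
qed (simp add: kat_dist_def)

lemma kat_dist_in_dists:
  assumes h: "h \<in> katetov X" and k: "k \<in> katetov X"
  shows "kat_dist X h k \<in> dists X"
proof (cases "h = k")
  case False
  then obtain y where y: "y \<in> pts X" "kat_dist X h k = max (h y) (k y)"
    using kat_dist_attained h by blast
  then show ?thesis using katetovD(3)[OF h y(1)] katetovD(3)[OF k y(1)] by (simp add: max_def)
qed (simp add: kat_dist_def fin_ultraD(3)[OF X])

lemma kat_dist_kat_point:
  assumes x: "x \<in> pts X" and h: "h \<in> katetov X"
  shows "kat_dist X (kat_point X x) h = h x"
  using kat_dist_le[OF x, of "kat_point X x" h]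
    katetov_le_kat_dist[OF h kat_point_katetov[OF X x] x] kat_dist_commute
  by (simp add: kat_point_def fin_ultra_dist_self[OF X x])

end

section \<open>Extension along embeddings\<close>

definition kat_ext :: "uspace \<Rightarrow> uspace \<Rightarrow> umor \<Rightarrow> (nat \<Rightarrow> nat) \<Rightarrow> nat \<Rightarrow> nat" where
  "kat_ext X Y f h = (\<lambda>y. if y \<in> pts Y
     then Min ((\<lambda>x. max (snd f (h x)) (dist Y (fst f x) y)) ` pts X) else 0)"

lemma kat_ext_outside: "y \<notin> pts Y \<Longrightarrow> kat_ext X Y f h y = 0"
  unfolding kat_ext_def by simp

context
  fixes X Y :: uspace and f :: umor
  assumes X: "fin_ultra X" and Y: "fin_ultra Y" and f: "dc_emb X Y f"
begin

lemma kat_ext_le: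
  assumes "y \<in> pts Y" "x \<in> pts X"
  shows "kat_ext X Y f h y \<le> max (snd f (h x)) (dist Y (fst f x) y)"
  using assms fin_ultraD(1)[OF X] unfolding kat_ext_def by (auto intro!: Min_le)

lemma kat_ext_attained:
  assumes "h \<in> katetov X" "y \<in> pts Y"
  obtains x where "x \<in> pts X" "kat_ext X Y f h y = max (snd f (h x)) (dist Y (fst f x) y)"
proof -
  let ?S = "(\<lambda>x. max (snd f (h x)) (dist Y (fst f x) y)) ` pts X"
  have "Min ?S \<in> ?S"
    using fin_ultraD(1)[OF X] katetovD(1)[OF assms(1)] by (intro Min_in) auto
  then show thesis using assms(2) that unfolding kat_ext_def by auto
qed

lemma kat_ext_image:
  assumes h: "h \<in> katetov X" and x: "x \<in> pts X"
  shows "kat_ext X Y f h (fst f x) = snd f (h x)"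
proof (rule antisym)
  have fx: "fst f x \<in> pts Y" using dc_embD(1)[OF f x] .
  show "kat_ext X Y f h (fst f x) \<le> snd f (h x)"
    using kat_ext_le[OF fx x, of h] fin_ultra_dist_self[OF Y fx] by simp
  obtain x' where x': "x' \<in> pts X"
    "kat_ext X Y f h (fst f x) = max (snd f (h x')) (dist Y (fst f x') (fst f x))"
    using kat_ext_attained[OF h fx] .
  have "h x \<le> max (h x') (dist X x' x)"
    using katetovD(4)[OF h x x'(1)] fin_ultraD(5)[OF X x x'(1)] by simp
  then show "snd f (h x) \<le> kat_ext X Y f h (fst f x)"
    using x'(2) dc_embD(6)[OF f x'(1) x]
      dc_emb_le_max_iff[OF f katetovD(3)[OF h x] katetovD(3)[OF h x'(1)] fin_ultraD(4)[OF X x'(1) x]]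
    by simp
qed

lemma dist_image_le_katetov:
  assumes h: "h \<in> katetov X" and x: "x \<in> pts X" and x': "x' \<in> pts X"
  shows "dist Y (fst f x) (fst f x') \<le> max (snd f (h x)) (snd f (h x'))"
  using katetovD(5)[OF h x x'] dc_embD(6)[OF f x x']
    dc_emb_le_max_iff[OF f fin_ultraD(4)[OF X x x'] katetovD(3)[OF h x] katetovD(3)[OF h x']]
  by simp

lemma kat_ext_katetov:
  assumes h: "h \<in> katetov X"
  shows "kat_ext X Y f h \<in> katetov Y"
proof -
  let ?e = "kat_ext X Y f h"
  have fx: "fst f x \<in> pts Y" if "x \<in> pts X" for x using dc_embD(1)[OF f that] .
  have in_dists: "?e y \<in> dists Y" if y: "y \<in> pts Y" for y
  proof -
    obtain x where x: "x \<in> pts X" "?e y = max (snd f (h x)) (dist Y (fst f x) y)"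
      using kat_ext_attained[OF h y] .
    then show ?thesis
      using dc_embD(3)[OF f katetovD(3)[OF h x(1)]] fin_ultraD(4)[OF Y fx[OF x(1)] y]
      by (simp add: max_def)
  qed
  have lipschitz: "?e y \<le> max (?e y') (dist Y y y')" if y: "y \<in> pts Y" and y': "y' \<in> pts Y" for y y'
  proof -
    obtain x where x: "x \<in> pts X" "?e y' = max (snd f (h x)) (dist Y (fst f x) y')"
      using kat_ext_attained[OF h y'] .
    have "?e y \<le> max (snd f (h x)) (dist Y (fst f x) y)" using kat_ext_le[OF y x(1)] .
    moreover have "dist Y (fst f x) y \<le> max (dist Y (fst f x) y') (dist Y y y')"
      using fin_ultraD(7)[OF Y fx[OF x(1)] y' y] fin_ultraD(5)[OF Y y' y] by simp
    ultimately show ?thesis using x(2) by linarith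
  qed
  have dist_le: "dist Y y y' \<le> max (?e y) (?e y')" if y: "y \<in> pts Y" and y': "y' \<in> pts Y" for y y'
  proof -
    obtain x where x: "x \<in> pts X" "?e y = max (snd f (h x)) (dist Y (fst f x) y)"
      using kat_ext_attained[OF h y] .
    obtain x' where x': "x' \<in> pts X" "?e y' = max (snd f (h x')) (dist Y (fst f x') y')"
      using kat_ext_attained[OF h y'] .
    have "dist Y y y' \<le> max (dist Y (fst f x) y) (dist Y (fst f x) y')"
      using fin_ultraD(7)[OF Y y fx[OF x(1)] y'] fin_ultraD(5)[OF Y y fx[OF x(1)]] by simp
    moreover have "dist Y (fst f x) y' \<le> max (dist Y (fst f x) (fst f x')) (dist Y (fst f x') y')"
      using fin_ultraD(7)[OF Y fx[OF x(1)] fx[OF x'(1)] y'] .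
    ultimately show ?thesis
      using x(2) x'(2) dist_image_le_katetov[OF h x(1) x'(1)] by linarith
  qed
  show ?thesis
    unfolding katetov_def using katetovD(1)[OF h] dc_embD(1)[OF f] in_dists lipschitz dist_le kat_ext_outside
    by blast
qed

lemma kat_dist_kat_ext:
  assumes h: "h \<in> katetov X" and k: "k \<in> katetov X"
  shows "kat_dist Y (kat_ext X Y f h) (kat_ext X Y f k) = snd f (kat_dist X h k)"
proof (cases "h = k")
  case True then show ?thesis using dc_embD(5)[OF f] by (simp add: kat_dist_def)
next
  case False
  then obtain x where x: "x \<in> pts X" "h x \<noteq> k x" using katetov_eqI[OF h k] by blast
  have ne: "snd f (h x) \<noteq> snd f (k x)"
    using strict_mono_on_eq[OF dc_embD(4)[OF f] katetovD(3)[OF h x(1)] katetovD(3)[OF k x(1)]] x(2)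
    by simp
  have "kat_dist Y (kat_ext X Y f h) (kat_ext X Y f k) = max (snd f (h x)) (snd f (k x))"
    using kat_dist_eq_max[OF Y kat_ext_katetov[OF h] kat_ext_katetov[OF k] dc_embD(1)[OF f x(1)]]
      kat_ext_image[OF h x(1)] kat_ext_image[OF k x(1)] ne by simp
  also have "\<dots> = snd f (kat_dist X h k)"
    using dc_emb_max[OF f katetovD(3)[OF h x(1)] katetovD(3)[OF k x(1)]] kat_dist_eq_max[OF X h k x]
    by simp
  finally show ?thesis .
qed

lemma kat_ext_eqI:
  assumes h: "h \<in> katetov X" and e: "e \<in> katetov Y"
    and on_image: "\<And>x. x \<in> pts X \<Longrightarrow> e (fst f x) = snd f (h x)"
    and realised: "\<And>y. y \<in> pts Y \<Longrightarrow> \<exists>x\<in>pts X. max (e (fst f x)) (dist Y (fst f x) y) \<le> e y"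
  shows "kat_ext X Y f h = e"
proof (rule katetov_eqI[OF kat_ext_katetov[OF h] e])
  fix y assume y: "y \<in> pts Y"
  obtain x where x: "x \<in> pts X" "max (e (fst f x)) (dist Y (fst f x) y) \<le> e y"
    using realised[OF y] by blast
  obtain x' where x': "x' \<in> pts X"
    "kat_ext X Y f h y = max (snd f (h x')) (dist Y (fst f x') y)"
    using kat_ext_attained[OF h y] .
  have fx': "fst f x' \<in> pts Y" using dc_embD(1)[OF f x'(1)] .
  have "kat_ext X Y f h y \<le> e y"
    using kat_ext_le[OF y x(1), of h] x(2) on_image[OF x(1)] by linarith
  moreover have "e y \<le> kat_ext X Y f h y"
    using katetovD(4)[OF e y fx'] fin_ultraD(5)[OF Y y fx'] x'(2) on_image[OF x'(1)] by simp
  ultimately show "kat_ext X Y f h y = e y" by simp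
qed

lemma kat_ext_kat_point:
  assumes x: "x \<in> pts X"
  shows "kat_ext X Y f (kat_point X x) = kat_point Y (fst f x)"
proof (rule kat_ext_eqI[OF kat_point_katetov[OF X x] kat_point_katetov[OF Y dc_embD(1)[OF f x]]])
  show "kat_point Y (fst f x) (fst f x') = snd f (kat_point X x x')" if "x' \<in> pts X" for x'
    using that dc_embD(1,6)[OF f] x by (simp add: kat_point_def)
  show "\<exists>x'\<in>pts X. max (kat_point Y (fst f x) (fst f x')) (dist Y (fst f x') y) \<le> kat_point Y (fst f x) y"
    if "y \<in> pts Y" for y
    using that x dc_embD(1)[OF f x] by (intro bexI[of _ x]) (auto simp: kat_point_def fin_ultra_dist_self[OF Y])
qed

end

lemma dc_emb_mcomp:
  assumes f: "dc_emb X Y f" and g: "dc_emb Y Z g"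
  shows "dc_emb X Z (mcomp g f)"
proof -
  have "inj_on (fst g \<circ> fst f) (pts X)"
    using dc_embD(1,2)[OF f] dc_embD(2)[OF g] by (intro comp_inj_on) (auto intro: inj_on_subset)
  moreover have "strict_mono_on (dists X) (snd g \<circ> snd f)"
    using dc_embD(3,4)[OF f] dc_embD(4)[OF g] by (auto simp: strict_mono_on_def)
  ultimately show ?thesis
    using dc_embD[OF f] dc_embD[OF g] unfolding dc_emb_def
    by (auto simp: strict_mono_on_less_eq)
qed

lemma kat_ext_mid:
  assumes X: "fin_ultra X" and h: "h \<in> katetov X"
  shows "kat_ext X X mid h = h"
  using kat_ext_eqI[OF X X dc_emb_mid h h] fin_ultra_dist_self[OF X] by fastforce

lemma kat_ext_mcomp:
  assumes X: "fin_ultra X" and Y: "fin_ultra Y" and Z: "fin_ultra Z"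
    and f: "dc_emb X Y f" and g: "dc_emb Y Z g" and h: "h \<in> katetov X"
  shows "kat_ext X Z (mcomp g f) h = kat_ext Y Z g (kat_ext X Y f h)"
proof (rule kat_ext_eqI[OF X Z dc_emb_mcomp[OF f g] h])
  let ?e = "kat_ext X Y f h"
  have e: "?e \<in> katetov Y" using kat_ext_katetov[OF X Y f h] .
  show "kat_ext Y Z g ?e \<in> katetov Z" using kat_ext_katetov[OF Y Z g e] .
  show on_image: "kat_ext Y Z g ?e (fst (mcomp g f) x) = snd (mcomp g f) (h x)" if x: "x \<in> pts X" for x
    using kat_ext_image[OF Y Z g e dc_embD(1)[OF f x]] kat_ext_image[OF X Y f h x] by simp
  show "\<exists>x\<in>pts X. max (kat_ext Y Z g ?e (fst (mcomp g f) x)) (dist Z (fst (mcomp g f) x) z)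
          \<le> kat_ext Y Z g ?e z" if z: "z \<in> pts Z" for z
  proof -
    obtain y where y: "y \<in> pts Y" "kat_ext Y Z g ?e z = max (snd g (?e y)) (dist Z (fst g y) z)"
      using kat_ext_attained[OF Y Z g e z] .
    obtain x where x: "x \<in> pts X" "?e y = max (snd f (h x)) (dist Y (fst f x) y)"
      using kat_ext_attained[OF X Y f h y(1)] .
    have fx: "fst f x \<in> pts Y" using dc_embD(1)[OF f x(1)] .
    have "snd g (?e y) = max (snd g (snd f (h x))) (dist Z (fst g (fst f x)) (fst g y))"
      using x(2) dc_emb_max[OF g dc_embD(3)[OF f katetovD(3)[OF h x(1)]] fin_ultraD(4)[OF Y fx y(1)]]
        dc_embD(6)[OF g fx y(1)] by simp
    moreover have "dist Z (fst g (fst f x)) z \<le> max (dist Z (fst g (fst f x)) (fst g y)) (dist Z (fst g y) z)"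
      using fin_ultraD(7)[OF Z dc_embD(1)[OF g fx] dc_embD(1)[OF g y(1)] z] .
    ultimately show ?thesis
      using on_image[OF x(1)] y(2) x(1) by (intro bexI[of _ x]) auto
  qed
qed

lemma kat_ext_cong:
  assumes "meq X f f'" "h \<in> katetov X"
  shows "kat_ext X Y f h = kat_ext X Y f' h"
proof -
  have "(\<lambda>x. max (snd f (h x)) (dist Y (fst f x) y)) ` pts X =
        (\<lambda>x. max (snd f' (h x)) (dist Y (fst f' x) y)) ` pts X" for y
    using assms katetovD(3) unfolding meq_def by (intro image_cong) auto
  then show ?thesis unfolding kat_ext_def by presburger
qed

section \<open>The Katetov space\<close>

definition infty_dist :: "uspace \<Rightarrow> nat" where
  "infty_dist X = 2 * Max (dists X) + 2"

fun kdist :: "uspace \<Rightarrow> (nat \<Rightarrow> nat) option \<Rightarrow> (nat \<Rightarrow> nat) option \<Rightarrow> nat" where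
  "kdist X (Some h) (Some k) = 2 * kat_dist X h k"
| "kdist X None None = 0"
| "kdist X _ _ = infty_dist X"

definition kpoints :: "uspace \<Rightarrow> (nat \<Rightarrow> nat) option set" where
  "kpoints X = insert None (Some ` katetov X)"

definition kdists :: "uspace \<Rightarrow> nat set" where
  "kdists X = insert (infty_dist X) {n. n div 2 \<in> dists X}"

lemma kpoints_simps [simp]: "None \<in> kpoints X" "Some h \<in> kpoints X \<longleftrightarrow> h \<in> katetov X"
  unfolding kpoints_def by auto

lemma double_less_infty_dist:
  assumes "fin_ultra X" "a \<in> dists X"
  shows "2 * a + 1 < infty_dist X"
  using Max_ge[OF fin_ultraD(2)[OF assms(1)] assms(2)] unfolding infty_dist_def by simp

context
  fixes X :: uspace
  assumes X: "fin_ultra X"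
begin

lemma kdist_le_infty_dist:
  assumes "a \<in> kpoints X" "b \<in> kpoints X"
  shows "kdist X a b \<le> infty_dist X"
proof -
  have "2 * kat_dist X h k \<le> infty_dist X" if "h \<in> katetov X" "k \<in> katetov X" for h k
    using double_less_infty_dist[OF X kat_dist_in_dists[OF X that]] by simp
  then show ?thesis using assms by (cases a; cases b) (auto simp: kpoints_def)
qed

lemma kdist_commute: "kdist X a b = kdist X b a"
  by (cases a; cases b) (simp_all add: kat_dist_commute)

lemma kdist_eq_0_iff:
  assumes "a \<in> kpoints X" "b \<in> kpoints X"
  shows "kdist X a b = 0 \<longleftrightarrow> a = b"
  using assms by (cases a; cases b) (auto simp: kpoints_def infty_dist_def kat_dist_eq_0_iff[OF X])

lemma kdist_triangle:
  assumes a: "a \<in> kpoints X" and b: "b \<in> kpoints X" and c: "c \<in> kpoints X"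
  shows "kdist X a c \<le> max (kdist X a b) (kdist X b c)"
proof (cases "a = None \<or> b = None \<or> c = None")
  case True
  then show ?thesis using kdist_le_infty_dist[OF a c] by (cases a; cases b; cases c) auto
next
  case False
  then obtain h k l where "a = Some h" "b = Some k" "c = Some l" by auto
  then show ?thesis using assms kat_dist_triangle[OF X, of h k l] by auto
qed

lemma kdist_in_kdists:
  assumes "a \<in> kpoints X" "b \<in> kpoints X"
  shows "kdist X a b \<in> kdists X"
  using assms fin_ultraD(3)[OF X] kat_dist_in_dists[OF X]
  by (cases a; cases b) (auto simp: kpoints_def kdists_def)

lemma finite_kpoints: "finite (kpoints X)"
  unfolding kpoints_def using finite_katetov[OF X] by simp

lemma finite_kdists: "finite (kdists X)"
proof -
  have "{n. n div 2 \<in> dists X} \<subseteq> {..2 * Max (dists X) + 1}"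
    using Max_ge[OF fin_ultraD(2)[OF X]] by fastforce
  then show ?thesis
    unfolding kdists_def using finite_subset by auto
qed

end

definition kcode :: "uspace \<Rightarrow> (nat \<Rightarrow> nat) option \<Rightarrow> nat" where
  "kcode X a = to_nat (map_option (\<lambda>h. map h (sorted_list_of_set (pts X))) a)"

definition kdecode :: "uspace \<Rightarrow> nat \<Rightarrow> (nat \<Rightarrow> nat) option" where
  "kdecode X = inv_into (kpoints X) (kcode X)"

definition katetov_space :: "uspace \<Rightarrow> uspace" where
  "katetov_space X = \<lparr>pts = kcode X ` kpoints X, dists = kdists X,
     dist = (\<lambda>u v. kdist X (kdecode X u) (kdecode X v))\<rparr>"

lemma katetov_space_simps [simp]:
  "pts (katetov_space X) = kcode X ` kpoints X" "dists (katetov_space X) = kdists X"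
  "dist (katetov_space X) u v = kdist X (kdecode X u) (kdecode X v)"
  unfolding katetov_space_def by simp_all

lemma inj_on_kcode:
  assumes X: "fin_ultra X"
  shows "inj_on (kcode X) (kpoints X)"
proof (rule inj_onI)
  fix a b assume a: "a \<in> kpoints X" and b: "b \<in> kpoints X" and eq: "kcode X a = kcode X b"
  have "h = k" if "h \<in> katetov X" "k \<in> katetov X"
    "map h (sorted_list_of_set (pts X)) = map k (sorted_list_of_set (pts X))" for h k
    using that fin_ultraD(1)[OF X] by (intro katetov_eqI) auto
  then show "a = b" using a b eq unfolding kcode_def by (cases a; cases b) auto
qed

lemma kdecode_kcode [simp]: "fin_ultra X \<Longrightarrow> a \<in> kpoints X \<Longrightarrow> kdecode X (kcode X a) = a"
  unfolding kdecode_def by (rule inv_into_f_f[OF inj_on_kcode])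

lemma fin_ultra_katetov_space:
  assumes X: "fin_ultra X"
  shows "fin_ultra (katetov_space X)"
proof -
  have "0 \<in> kdists X" using fin_ultraD(3)[OF X] by (simp add: kdists_def)
  moreover have "kcode X a = kcode X b \<longleftrightarrow> a = b" if "a \<in> kpoints X" "b \<in> kpoints X" for a b
    using inj_on_eq_iff[OF inj_on_kcode[OF X] that] .
  ultimately show ?thesis
    unfolding fin_ultra_def katetov_space_simps
    using finite_kpoints[OF X] finite_kdists[OF X] kdist_in_kdists[OF X] kdist_commute[OF X]
      kdist_eq_0_iff[OF X] kdist_triangle[OF X] X
    by (simp add: ball_simps)
qed

lemma dc_emb_katetov_spaceI:
  assumes X: "fin_ultra X" and Z: "fin_ultra Z"
    and q: "\<And>z. z \<in> pts Z \<Longrightarrow> q z \<in> kpoints X"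
    and \<sigma>: "\<And>d. d \<in> dists Z \<Longrightarrow> \<sigma> d \<in> kdists X" "strict_mono_on (dists Z) \<sigma>" "\<sigma> 0 = 0"
    and dist: "\<And>z z'. z \<in> pts Z \<Longrightarrow> z' \<in> pts Z \<Longrightarrow> kdist X (q z) (q z') = \<sigma> (dist Z z z')"
  shows "dc_emb Z (katetov_space X) (kcode X \<circ> q, \<sigma>)"
proof -
  have "inj_on q (pts Z)"
  proof (rule inj_onI)
    fix z z' assume z: "z \<in> pts Z" and z': "z' \<in> pts Z" and "q z = q z'"
    then have "\<sigma> (dist Z z z') = \<sigma> 0"
      using dist[OF z z'] kdist_eq_0_iff[OF X q[OF z] q[OF z']] \<sigma>(3) by simp
    then show "z = z'"
      using strict_mono_on_eq[OF \<sigma>(2) fin_ultraD(4)[OF Z z z'] fin_ultraD(3)[OF Z]]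
        fin_ultraD(6)[OF Z z z'] by simp
  qed
  then have "inj_on (kcode X \<circ> q) (pts Z)"
    using q inj_on_kcode[OF X] by (intro comp_inj_on) (auto intro: inj_on_subset)
  then show ?thesis
    unfolding dc_emb_def using q \<sigma> dist X by (auto simp: strict_mono_on_less_eq)
qed

section \<open>Functoriality\<close>

definition kpoint_map :: "uspace \<Rightarrow> uspace \<Rightarrow> umor \<Rightarrow> (nat \<Rightarrow> nat) option \<Rightarrow> (nat \<Rightarrow> nat) option" where
  "kpoint_map X Y f = map_option (kat_ext X Y f)"

definition kdist_map :: "uspace \<Rightarrow> uspace \<Rightarrow> umor \<Rightarrow> nat \<Rightarrow> nat" where
  "kdist_map X Y f n = (if n = infty_dist X then infty_dist Y else 2 * snd f (n div 2) + n mod 2)"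

definition katetov_map :: "uspace \<Rightarrow> uspace \<Rightarrow> umor \<Rightarrow> umor" where
  "katetov_map X Y f = (kcode Y \<circ> (kpoint_map X Y f \<circ> kdecode X), kdist_map X Y f)"

definition katetov_eta :: "uspace \<Rightarrow> umor" where
  "katetov_eta X = (kcode X \<circ> (\<lambda>x. Some (kat_point X x)), (*) 2)"

lemma kdists_cases:
  assumes "fin_ultra X" "n \<in> kdists X"
  obtains "n = infty_dist X" | "n div 2 \<in> dists X" "n < infty_dist X"
  using assms double_less_infty_dist[of X "n div 2"] unfolding kdists_def by fastforce

lemma kdist_map_eq:
  assumes "fin_ultra X" "n div 2 \<in> dists X"
  shows "kdist_map X Y f n = 2 * snd f (n div 2) + n mod 2"
  using double_less_infty_dist[OF assms] unfolding kdist_map_def by auto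

context
  fixes X Y :: uspace and f :: umor
  assumes X: "fin_ultra X" and Y: "fin_ultra Y" and f: "dc_emb X Y f"
begin

lemma kpoint_map_kpoints: "a \<in> kpoints X \<Longrightarrow> kpoint_map X Y f a \<in> kpoints Y"
  using kat_ext_katetov[OF X Y f] unfolding kpoint_map_def kpoints_def by auto

lemma kdist_map_kdists:
  assumes n: "n \<in> kdists X"
  shows "kdist_map X Y f n \<in> kdists Y"
proof (cases rule: kdists_cases[OF X n])
  case 2
  then show ?thesis
    using kdist_map_eq[OF X 2(1)] dc_embD(3)[OF f 2(1)] unfolding kdists_def by simp
qed (simp add: kdists_def kdist_map_def)

lemma strict_mono_on_kdist_map: "strict_mono_on (kdists X) (kdist_map X Y f)"
proof (rule strict_mono_onI)
  fix n m assume n: "n \<in> kdists X" and m: "m \<in> kdists X" and less: "n < m"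
  have finite_lt: "kdist_map X Y f k < infty_dist Y" if "k div 2 \<in> dists X" for k
    using kdist_map_eq[OF X that] double_less_infty_dist[OF Y dc_embD(3)[OF f that]] by simp
  show "kdist_map X Y f n < kdist_map X Y f m"
  proof (cases rule: kdists_cases[OF X m])
    case 1
    then have "kdist_map X Y f m = infty_dist Y" by (simp add: kdist_map_def)
    with n less 1 show ?thesis
      by (cases rule: kdists_cases[OF X n]) (auto simp: finite_lt)
  next
    case m': 2
    with n less have n': "n div 2 \<in> dists X"
      by (cases rule: kdists_cases[OF X n]) auto
    have "n div 2 < m div 2 \<or> (n div 2 = m div 2 \<and> n mod 2 < m mod 2)"
      using less by presburger
    moreover have "n div 2 < m div 2 \<Longrightarrow> snd f (n div 2) < snd f (m div 2)"
      using strict_mono_onD[OF dc_embD(4)[OF f] n' m'(1)] .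
    ultimately show ?thesis using kdist_map_eq[OF X n'] kdist_map_eq[OF X m'(1)] by auto
  qed
qed

lemma kdist_kpoint_map:
  assumes "a \<in> kpoints X" "b \<in> kpoints X"
  shows "kdist Y (kpoint_map X Y f a) (kpoint_map X Y f b) = kdist_map X Y f (kdist X a b)"
proof -
  have "kdist_map X Y f 0 = 0"
    using kdist_map_eq[OF X, of 0] fin_ultraD(3)[OF X] dc_embD(5)[OF f] by simp
  moreover have "kdist_map X Y f (2 * kat_dist X h k) = 2 * snd f (kat_dist X h k)"
    if "h \<in> katetov X" "k \<in> katetov X" for h k
    using kdist_map_eq[OF X, of "2 * kat_dist X h k"] kat_dist_in_dists[OF X that] by simp
  moreover have "kdist_map X Y f (infty_dist X) = infty_dist Y" by (simp add: kdist_map_def)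
  ultimately show ?thesis
    using assms kat_dist_kat_ext[OF X Y f] by (cases a; cases b) (simp_all add: kpoint_map_def)
qed

lemma dc_emb_katetov_map: "dc_emb (katetov_space X) (katetov_space Y) (katetov_map X Y f)"
  unfolding katetov_map_def
proof (rule dc_emb_katetov_spaceI[OF Y fin_ultra_katetov_space[OF X]])
  show "(kpoint_map X Y f \<circ> kdecode X) u \<in> kpoints Y" if "u \<in> pts (katetov_space X)" for u
    using that X kpoint_map_kpoints by auto
  show "kdist_map X Y f d \<in> kdists Y" if "d \<in> dists (katetov_space X)" for d
    using that kdist_map_kdists by simp
  show "strict_mono_on (dists (katetov_space X)) (kdist_map X Y f)"
    using strict_mono_on_kdist_map by simp
  show "kdist_map X Y f 0 = 0"
    using kdist_map_eq[OF X, of 0] fin_ultraD(3)[OF X] dc_embD(5)[OF f] by simp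
  show "kdist Y ((kpoint_map X Y f \<circ> kdecode X) u) ((kpoint_map X Y f \<circ> kdecode X) u') =
      kdist_map X Y f (dist (katetov_space X) u u')"
    if "u \<in> pts (katetov_space X)" "u' \<in> pts (katetov_space X)" for u u'
    using that X kdist_kpoint_map by auto
qed

end

lemma dc_emb_katetov_eta:
  assumes X: "fin_ultra X"
  shows "dc_emb X (katetov_space X) (katetov_eta X)"
  unfolding katetov_eta_def
proof (rule dc_emb_katetov_spaceI[OF X X])
  show "strict_mono_on (dists X) ((*) (2::nat))" by (rule strict_mono_onI) simp
  show "kdist X ((\<lambda>x. Some (kat_point X x)) x) ((\<lambda>x. Some (kat_point X x)) x') = 2 * dist X x x'"
    if "x \<in> pts X" "x' \<in> pts X" for x x'
    using that kat_dist_kat_point[OF X] kat_point_katetov[OF X] fin_ultraD(5)[OF X]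
    by (simp add: kat_point_def)
qed (auto simp: kat_point_katetov[OF X] kdists_def)

lemma katetov_map_cong:
  assumes X: "fin_ultra X" and eq: "meq X f f'"
  shows "meq (katetov_space X) (katetov_map X Y f) (katetov_map X Y f')"
proof -
  have "kpoint_map X Y f a = kpoint_map X Y f' a" if "a \<in> kpoints X" for a
    using that kat_ext_cong[OF eq] by (cases a) (auto simp: kpoint_map_def)
  moreover have "kdist_map X Y f n = kdist_map X Y f' n" if "n \<in> kdists X" for n
    using eq by (cases rule: kdists_cases[OF X that]) (auto simp: kdist_map_eq[OF X] meq_def kdist_map_def)
  ultimately show ?thesis
    unfolding meq_def katetov_map_def using X by auto
qed

lemma katetov_map_mid:
  assumes X: "fin_ultra X"
  shows "meq (katetov_space X) (katetov_map X X mid) mid"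
proof -
  have "kpoint_map X X mid a = a" if "a \<in> kpoints X" for a
    using that kat_ext_mid[OF X] by (cases a) (auto simp: kpoint_map_def)
  moreover have "kdist_map X X mid n = n" if "n \<in> kdists X" for n
    by (cases rule: kdists_cases[OF X that]) (auto simp: kdist_map_eq[OF X] kdist_map_def)
  ultimately show ?thesis
    unfolding meq_def katetov_map_def using X by auto
qed

lemma katetov_map_mcomp:
  assumes X: "fin_ultra X" and Y: "fin_ultra Y" and Z: "fin_ultra Z"
    and f: "dc_emb X Y f" and g: "dc_emb Y Z g"
  shows "meq (katetov_space X) (katetov_map X Z (mcomp g f))
           (mcomp (katetov_map Y Z g) (katetov_map X Y f))"
proof -
  have "kpoint_map X Z (mcomp g f) a = kpoint_map Y Z g (kpoint_map X Y f a)" if "a \<in> kpoints X" for a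
    using that kat_ext_mcomp[OF X Y Z f g] by (cases a) (auto simp: kpoint_map_def)
  moreover have "kdist_map X Z (mcomp g f) n = kdist_map Y Z g (kdist_map X Y f n)"
    if "n \<in> kdists X" for n
  proof (cases rule: kdists_cases[OF X that])
    case 2
    then show ?thesis
      using kdist_map_eq[OF X 2(1)] kdist_map_eq[OF Y, of "kdist_map X Y f n"] dc_embD(3)[OF f 2(1)]
      by simp
  qed (simp add: kdist_map_def)
  ultimately show ?thesis
    unfolding meq_def katetov_map_def using X Y kpoint_map_kpoints[OF X Y f] by auto
qed

lemma katetov_eta_natural:
  assumes X: "fin_ultra X" and Y: "fin_ultra Y" and f: "dc_emb X Y f"
  shows "meq X (mcomp (katetov_map X Y f) (katetov_eta X)) (mcomp (katetov_eta Y) f)"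
  unfolding meq_def katetov_map_def katetov_eta_def
  using X kat_point_katetov[OF X] kat_ext_kat_point[OF X Y f] kdist_map_eq[OF X]
  by (auto simp: kpoint_map_def)

section \<open>Realising one-point extensions\<close>

definition kat_pullback :: "uspace \<Rightarrow> umor \<Rightarrow> (nat \<Rightarrow> nat) \<Rightarrow> nat \<Rightarrow> nat" where
  "kat_pullback X f e = (\<lambda>x. if x \<in> pts X then inv_into (dists X) (snd f) (e (fst f x)) else 0)"

definition pullback_dist :: "uspace \<Rightarrow> umor \<Rightarrow> nat \<Rightarrow> nat" where
  "pullback_dist X f d = (if d \<in> snd f ` dists X then 2 * inv_into (dists X) (snd f) d
     else 2 * Max {a \<in> dists X. snd f a < d} + 1)"

context
  fixes X Y :: uspace and f :: umor
  assumes X: "fin_ultra X" and Y: "fin_ultra Y" and f: "dc_emb X Y f"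
begin

lemma inv_into_dists_image: "a \<in> dists X \<Longrightarrow> inv_into (dists X) (snd f) (snd f a) = a"
  using inv_into_f_f[OF strict_mono_on_imp_inj_on[OF dc_embD(4)[OF f]]] .

lemma kat_pullback_katetov:
  assumes e: "e \<in> katetov Y" and ne: "pts X \<noteq> {}"
    and old: "\<And>x. x \<in> pts X \<Longrightarrow> e (fst f x) \<in> snd f ` dists X"
  shows "kat_pullback X f e \<in> katetov X"
proof -
  let ?h = "kat_pullback X f e"
  have h: "?h x \<in> dists X" "snd f (?h x) = e (fst f x)" if "x \<in> pts X" for x
    using inv_into_into[OF old[OF that]] f_inv_into_f[OF old[OF that]] that
    unfolding kat_pullback_def by simp_all
  have fx: "fst f x \<in> pts Y" if "x \<in> pts X" for x using dc_embD(1)[OF f that] .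
  have lipschitz: "?h x \<le> max (?h y) (dist X x y)" if x: "x \<in> pts X" and y: "y \<in> pts X" for x y
  proof -
    have "snd f (?h x) \<le> max (snd f (?h y)) (snd f (dist X x y))"
      using katetovD(4)[OF e fx[OF x] fx[OF y]] h(2)[OF x] h(2)[OF y] dc_embD(6)[OF f x y] by simp
    then show ?thesis
      using dc_emb_le_max_iff[OF f h(1)[OF x] h(1)[OF y] fin_ultraD(4)[OF X x y]] by simp
  qed
  have dist_le: "dist X x y \<le> max (?h x) (?h y)" if x: "x \<in> pts X" and y: "y \<in> pts X" for x y
  proof -
    have "snd f (dist X x y) \<le> max (snd f (?h x)) (snd f (?h y))"
      using katetovD(5)[OF e fx[OF x] fx[OF y]] h(2)[OF x] h(2)[OF y] dc_embD(6)[OF f x y] by simp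
    then show ?thesis
      using dc_emb_le_max_iff[OF f fin_ultraD(4)[OF X x y] h(1)[OF x] h(1)[OF y]] by simp
  qed
  have "?h x = 0" if "x \<notin> pts X" for x using that by (simp add: kat_pullback_def)
  then show ?thesis
    unfolding katetov_def using ne h(1) lipschitz dist_le by blast
qed

lemma kat_pullback_kat_point:
  assumes x: "x \<in> pts X"
  shows "kat_pullback X f (kat_point Y (fst f x)) = kat_point X x"
  using x dc_embD(1,6)[OF f] inv_into_dists_image fin_ultraD(4)[OF X]
  by (auto simp: kat_pullback_def kat_point_def)

lemma kat_dist_kat_pullback:
  assumes y: "y \<in> pts Y" and x: "x \<in> pts X"
    and old: "\<And>x. x \<in> pts X \<Longrightarrow> dist Y y (fst f x) \<in> snd f ` dists X"
  shows "kat_dist X (kat_pullback X f (kat_point Y y)) (kat_pullback X f (kat_point Y (fst f x))) =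
    inv_into (dists X) (snd f) (dist Y y (fst f x))"
proof -
  let ?h = "kat_pullback X f (kat_point Y y)"
  have "?h \<in> katetov X"
    using x old dc_embD(1)[OF f]
    by (intro kat_pullback_katetov kat_point_katetov[OF Y y]) (auto simp: kat_point_def)
  then have "kat_dist X ?h (kat_point X x) = ?h x"
    using kat_dist_kat_point[OF X x] kat_dist_commute by metis
  also have "?h x = inv_into (dists X) (snd f) (dist Y y (fst f x))"
    using x dc_embD(1)[OF f x] by (simp add: kat_pullback_def kat_point_def)
  finally show ?thesis using kat_pullback_kat_point[OF x] by simp
qed

lemma pullback_dist_image: "a \<in> dists X \<Longrightarrow> pullback_dist X f (snd f a) = 2 * a"
  unfolding pullback_dist_def using inv_into_dists_image by simp

lemma max_below_new_dist:
  assumes d: "d \<in> dists Y" "d \<notin> snd f ` dists X"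
  shows "Max {a \<in> dists X. snd f a < d} \<in> dists X"
    and "\<And>a. a \<in> dists X \<Longrightarrow> a \<le> Max {a \<in> dists X. snd f a < d} \<longleftrightarrow> snd f a < d"
proof -
  let ?S = "{a \<in> dists X. snd f a < d}"
  have "0 \<in> ?S"
    using d fin_ultraD(3)[OF X] dc_embD(5)[OF f] by (metis (mono_tags) CollectI image_eqI not_gr0)
  have fin: "finite ?S" using fin_ultraD(2)[OF X] by simp
  have M: "Max ?S \<in> ?S" using Max_in[OF fin] \<open>0 \<in> ?S\<close> by blast
  then show "Max ?S \<in> dists X" by simp
  show "a \<le> Max ?S \<longleftrightarrow> snd f a < d" if a: "a \<in> dists X" for a
  proof
    assume "a \<le> Max ?S"
    then show "snd f a < d"
      using M strict_mono_on_leD[OF dc_embD(4)[OF f] a] by fastforce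
  qed (use a fin in auto)
qed

lemma pullback_dist_kdists:
  assumes "d \<in> dists Y"
  shows "pullback_dist X f d \<in> kdists X"
  using assms max_below_new_dist(1)[OF assms] inv_into_into[of d "snd f" "dists X"]
  unfolding pullback_dist_def kdists_def by auto

lemma strict_mono_on_pullback_dist:
  assumes new: "card (dists Y - snd f ` dists X) \<le> 1"
  shows "strict_mono_on (dists Y) (pullback_dist X f)"
proof (rule strict_mono_onI)
  fix d d' assume d: "d \<in> dists Y" and d': "d' \<in> dists Y" and less: "d < d'"
  have finite_new: "finite (dists Y - snd f ` dists X)" using fin_ultraD(2)[OF Y] by simp
  consider (old_old) a a' where "a \<in> dists X" "a' \<in> dists X" "d = snd f a" "d' = snd f a'"
    | (old_new) a where "a \<in> dists X" "d = snd f a" "d' \<notin> snd f ` dists X"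
    | (new_old) a' where "a' \<in> dists X" "d \<notin> snd f ` dists X" "d' = snd f a'"
    | (new_new) "d \<notin> snd f ` dists X" "d' \<notin> snd f ` dists X"
    by (metis imageE)
  then show "pullback_dist X f d < pullback_dist X f d'"
  proof cases
    case old_old
    then show ?thesis
      using less strict_mono_on_less[OF dc_embD(4)[OF f]] by (simp add: pullback_dist_image)
  next
    case old_new
    then show ?thesis
      using less max_below_new_dist(2)[OF d' old_new(3) old_new(1)]
      by (simp add: pullback_dist_def inv_into_dists_image)
  next
    case new_old
    let ?M = "Max {a \<in> dists X. snd f a < d}"
    have M: "?M \<in> dists X" using max_below_new_dist(1)[OF d new_old(2)] .
    have "snd f ?M < snd f a'"
      using max_below_new_dist(2)[OF d new_old(2) M] less new_old(3) by simp
    then have "?M < a'" using strict_mono_on_less[OF dc_embD(4)[OF f] M new_old(1)] by simp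
    then show ?thesis
      using new_old by (simp add: pullback_dist_def inv_into_dists_image)
  next
    case new_new
    have "\<forall>a\<in>dists Y - snd f ` dists X. \<forall>b\<in>dists Y - snd f ` dists X. a = b"
      using new card_le_Suc0_iff_eq[OF finite_new] by simp
    then have "d = d'" using d d' new_new by blast
    then show ?thesis using less by simp
  qed
qed

end

lemma katetov_extension_property:
  assumes X: "fin_ultra X" and Y: "fin_ultra Y" and f: "dc_emb X Y f"
    and new_pts: "card (pts Y - fst f ` pts X) \<le> 1"
    and new_dists: "card (dists Y - snd f ` dists X) \<le> 1"
    and old_dists: "\<And>y y'. y \<in> pts Y \<Longrightarrow> y' \<in> pts Y \<Longrightarrow> dist Y y y' \<in> snd f ` dists X"
  shows "\<exists>g. dc_emb Y (katetov_space X) g \<and> meq X (mcomp g f) (katetov_eta X)"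
proof -
  \<comment> \<open>If \<open>X\<close> is empty, \<open>Y\<close> has at most one point, which goes to the extra point.\<close>
  define q where
    "q y = (if pts X = {} then None else Some (kat_pullback X f (kat_point Y y)))" for y
  have q_kpoints: "q y \<in> kpoints X" if y: "y \<in> pts Y" for y
  proof -
    have "kat_pullback X f (kat_point Y y) \<in> katetov X" if "pts X \<noteq> {}"
      by (rule kat_pullback_katetov[OF X Y f kat_point_katetov[OF Y y] that])
        (simp add: kat_point_def dc_embD(1)[OF f] old_dists[OF y])
    then show ?thesis unfolding q_def by simp
  qed
  have q_image: "q (fst f x) = Some (kat_point X x)" if "x \<in> pts X" for x
    using that kat_pullback_kat_point[OF X Y f] unfolding q_def by auto
  have pullback_dist_0: "pullback_dist X f 0 = 0"
    using pullback_dist_image[OF X Y f fin_ultraD(3)[OF X]] dc_embD(5)[OF f] by simp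
  have dist_to_image: "kdist X (q y) (q (fst f x)) = pullback_dist X f (dist Y y (fst f x))"
    if y: "y \<in> pts Y" and x: "x \<in> pts X" for x y
  proof -
    obtain a where a: "a \<in> dists X" "dist Y y (fst f x) = snd f a"
      using old_dists[OF y dc_embD(1)[OF f x]] by blast
    then show ?thesis
      using x kat_dist_kat_pullback[OF X Y f y x] old_dists[OF y] dc_embD(1)[OF f]
        inv_into_dists_image[OF X Y f] pullback_dist_image[OF X Y f]
      unfolding q_def by auto
  qed
  have q_dist: "kdist X (q y) (q y') = pullback_dist X f (dist Y y y')"
    if y: "y \<in> pts Y" and y': "y' \<in> pts Y" for y y'
  proof (cases "y' \<in> fst f ` pts X \<or> y \<in> fst f ` pts X")
    case True
    then show ?thesis
      using dist_to_image y y' kdist_commute[OF X] fin_ultraD(5)[OF Y] by auto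
  next
    case False
    have "finite (pts Y - fst f ` pts X)" using fin_ultraD(1)[OF Y] by simp
    then have "y = y'"
      using False y y' new_pts card_le_Suc0_iff_eq by (metis DiffI One_nat_def)
    then show ?thesis
      using kdist_eq_0_iff[OF X q_kpoints[OF y] q_kpoints[OF y]] fin_ultra_dist_self[OF Y y]
        pullback_dist_0 by simp
  qed
  have "dc_emb Y (katetov_space X) (kcode X \<circ> q, pullback_dist X f)"
    using X Y q_kpoints pullback_dist_kdists[OF X Y f] strict_mono_on_pullback_dist[OF X Y f new_dists]
      pullback_dist_0 q_dist
    by (rule dc_emb_katetov_spaceI)
  moreover have "meq X (mcomp (kcode X \<circ> q, pullback_dist X f) f) (katetov_eta X)"
    unfolding meq_def katetov_eta_def using q_image pullback_dist_image[OF X Y f] by simp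
  ultimately show ?thesis by blast
qed

lemma one_point_ext_katetov_extension_property:
  assumes X: "fin_ultra X" and Y: "fin_ultra Y" and ext: "one_point_ext X Y f"
  shows "\<exists>g. dc_emb Y (katetov_space X) g \<and> meq X (mcomp g f) (katetov_eta X)"
proof -
  have f: "dc_emb X Y f" using ext unfolding one_point_ext_def by simp
  have "(fst f ` pts X = pts Y \<and> card (dists Y - snd f ` dists X) = 1) \<or>
      (card (pts Y - fst f ` pts X) = 1 \<and> snd f ` dists X = dists Y)"
    using ext unfolding one_point_ext_def by simp
  then show ?thesis
  proof (elim disjE conjE)
    assume pts: "fst f ` pts X = pts Y" and dists: "card (dists Y - snd f ` dists X) = 1"
    have "dist Y y y' \<in> snd f ` dists X" if "y \<in> pts Y" "y' \<in> pts Y" for y y'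
    proof -
      have "y \<in> fst f ` pts X" "y' \<in> fst f ` pts X" using that pts by simp_all
      then obtain x x' where "x \<in> pts X" "x' \<in> pts X" "y = fst f x" "y' = fst f x'"
        by blast
      then show ?thesis using dc_embD(6)[OF f] fin_ultraD(4)[OF X] by simp
    qed
    with pts dists show ?thesis by (intro katetov_extension_property[OF X Y f]) simp_all
  next
    assume "card (pts Y - fst f ` pts X) = 1" and dists: "snd f ` dists X = dists Y"
    then show ?thesis
      by (intro katetov_extension_property[OF X Y f]) (simp_all add: fin_ultraD(4)[OF Y])
  qed
qed

theorem proposition4p12:
  shows "\<exists>F Fm eta. katetov_functor F Fm eta"
proof (intro exI)
  show "katetov_functor katetov_space katetov_map katetov_eta"
    unfolding katetov_functor_def is_functor_def is_nat_trans_id_def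
    by (simp add: fin_ultra_katetov_space dc_emb_katetov_map katetov_map_cong katetov_map_mid
      katetov_map_mcomp dc_emb_katetov_eta katetov_eta_natural
      one_point_ext_katetov_extension_property del: split_paired_All split_paired_Ex)
qed

end
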